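(* The sets $$(\mathrm s^{(n,k)},T,\varepsilon)=\{S\in\mathcal M_{\mathcal G,\Gamma}:\mathrm s^{(n,k)}(T,S)<\varepsilon\},\qquad n,k\in\mathbb N,\ \varepsilon>0,\ T\in\mathcal M_{\mathcal G,\Gamma},$$ form a base of the topology on $\mathcal M_{\mathcal G,\Gamma}$ induced by the metric $\mathrm m_{\mathcal G,\Gamma}$, where $\mathrm s^{(n,k)}(T,S)=\sup_{g\in\Gamma\cup(\bigcup_{i\le n}K_i)}\mathrm a_k(T^g,S^g)$.
   Context: $(X,\Sigma,\mu)$ is a separable Lebesgue space with a non-atomic probability measure $\mu$. $\mathcal A$ is the group of invertible measure-preserving transformations of $X$, two transformations being identified if they agree outside a null set. Fix a countable family $\{A_i\}_{i\in\mathbb N}\subset\Sigma$ that generates $\Sigma$ and is dense in $\Sigma$ (for every $A\in\Sigma$ and $\varepsilon>0$ there is $i$ with $\mu(A_i\triangle A)<\varepsilon$). For $T,S\in\mathcal A$ put $\mathrm d(T,S)=\sum_{i}2^{-i}\big(\mu(TA_i\triangle SA_i)+\mu(T^{-1}A_i\triangle S^{-1}A_i)\big)$, $\mathrm a(T,S)=\sum_{i,j}2^{-(i+j)}|\mu(TA_i\cap A_j)-\mu(SA_i\cap A_j)|$, and $\mathrm a_k(T,S)=\sum_{i,j\le k}2^{-(i+j)}|\mu(TA_i\cap A_j)-\mu(SA_i\cap A_j)|$. $\mathcal G$ is a Hausdorff locally compact group with a countable neighborhood base. Fix an at most countable family $\{K_i\}$ of compact subsets of $\mathcal G$ with nonempty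 interiors whose union contains a set generating $\mathcal G$ (if the family has fewer than $n$ members, $\bigcup_{i\le n}K_i$ means the union of all of them). An action of $\mathcal G$ is a family $T=\{T^g\}_{g\in\mathcal G}\subset\mathcal A$ with $T^gT^h=T^{gh}$ for all $g,h$ and such that $g\mapsto\mu(T^gA\cap B)$ is continuous for all $A,B\in\Sigma$. $\mathrm d_{\mathcal G}(T,S)=\sum_i 2^{-i}\sup_{g\in K_i}\mathrm d(T^g,S^g)$. Let $\Gamma\subset\mathcal G$ be an unbounded subset (not contained in any compact set). An action $T$ is $\Gamma$-mixing if for all $A,B\in\Sigma$ and $\varepsilon>0$ there is a compact $C\subset\mathcal G$ with $|\mu(T^gA\cap B)-\mu(A)\mu(B)|<\varepsilon$ for all $g\in\Gamma\setminus C$. $\mathcal M_{\mathcal G,\Gamma}$ is the set of all $\Gamma$-mixing actions with the leash metric $\mathrm m_{\mathcal G,\Gamma}(T,S)=\mathrm d_{\mathcal G}(T,S)+\sup_{g\in\Gamma}\mathrm a(T^g,S^g)$. *)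

theory Defs
  imports "HOL-Analysis.Analysis" "HOL-Probability.Probability"
begin

text \<open>Indices of the families A_i and K_i start at 0 here; the weight 2^{-i} of the
paper (indices starting at 1) becomes (1/2)^(Suc i).\<close>

definition sdiff :: "'a set \<Rightarrow> 'a set \<Rightarrow> 'a set" where
  "sdiff X Y = (X - Y) \<union> (Y - X)"

text \<open>Invertible measure-preserving transformation (a representative of an element of the group A).\<close>
definition inv_mpt :: "'a measure \<Rightarrow> ('a \<Rightarrow> 'a) \<Rightarrow> bool" where
  "inv_mpt M T \<longleftrightarrow> T \<in> measurable M M \<and> bij_betw T (space M) (space M)
     \<and> the_inv_into (space M) T \<in> measurable M M \<and> distr M M T = M"

definition pre :: "'a measure \<Rightarrow> ('a \<Rightarrow> 'a) \<Rightarrow> 'a set \<Rightarrow> 'a set" where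
  "pre M T X = T -` X \<inter> space M"

definition dist_d :: "'a measure \<Rightarrow> (nat \<Rightarrow> 'a set) \<Rightarrow> ('a \<Rightarrow> 'a) \<Rightarrow> ('a \<Rightarrow> 'a) \<Rightarrow> real" where
  "dist_d M A T S = (\<Sum>i. (1/2)^(Suc i) *
      (measure M (sdiff (T ` A i) (S ` A i)) + measure M (sdiff (pre M T (A i)) (pre M S (A i)))))"

definition dist_a :: "'a measure \<Rightarrow> (nat \<Rightarrow> 'a set) \<Rightarrow> ('a \<Rightarrow> 'a) \<Rightarrow> ('a \<Rightarrow> 'a) \<Rightarrow> real" where
  "dist_a M A T S = (\<Sum>i. \<Sum>j. (1/2)^(Suc i + Suc j) *
      \<bar>measure M (T ` A i \<inter> A j) - measure M (S ` A i \<inter> A j)\<bar>)"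

text \<open>a_k: indices i, j \<le> k in the paper's 1-based indexing, i.e. i, j < k here.\<close>
definition dist_ak :: "'a measure \<Rightarrow> (nat \<Rightarrow> 'a set) \<Rightarrow> nat \<Rightarrow> ('a \<Rightarrow> 'a) \<Rightarrow> ('a \<Rightarrow> 'a) \<Rightarrow> real" where
  "dist_ak M A k T S = (\<Sum>i<k. \<Sum>j<k. (1/2)^(Suc i + Suc j) *
      \<bar>measure M (T ` A i \<inter> A j) - measure M (S ` A i \<inter> A j)\<bar>)"

inductive_set gen_subgroup :: "'g::group_add set \<Rightarrow> 'g set" for X where
  gen_base: "x \<in> X \<Longrightarrow> x \<in> gen_subgroup X"
| gen_zero: "0 \<in> gen_subgroup X"
| gen_add: "x \<in> gen_subgroup X \<Longrightarrow> y \<in> gen_subgroup X \<Longrightarrow> x + y \<in> gen_subgroup X"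
| gen_uminus: "x \<in> gen_subgroup X \<Longrightarrow> - x \<in> gen_subgroup X"

text \<open>Measure-preserving action of the group (written additively, not assumed commutative).\<close>
definition is_action :: "'a measure \<Rightarrow> ('g::{topological_space,group_add} \<Rightarrow> 'a \<Rightarrow> 'a) \<Rightarrow> bool" where
  "is_action M T \<longleftrightarrow> (\<forall>g. inv_mpt M (T g))
     \<and> (\<forall>g h. AE x in M. T (g + h) x = T g (T h x))
     \<and> (\<forall>A\<in>sets M. \<forall>B\<in>sets M. continuous_on UNIV (\<lambda>g. measure M (T g ` A \<inter> B)))"

definition mixing :: "'a measure \<Rightarrow> 'g::{topological_space,group_add} set \<Rightarrow> ('g \<Rightarrow> 'a \<Rightarrow> 'a) \<Rightarrow> bool" where
  "mixing M \<Gamma> T \<longleftrightarrow> (\<forall>A\<in>sets M. \<forall>B\<in>sets M. \<forall>\<epsilon>>0. \<exists>C. compact C \<and>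
      (\<forall>g\<in>\<Gamma> - C. \<bar>measure M (T g ` A \<inter> B) - measure M A * measure M B\<bar> < \<epsilon>))"

definition Mix :: "'a measure \<Rightarrow> 'g::{topological_space,group_add} set \<Rightarrow> ('g \<Rightarrow> 'a \<Rightarrow> 'a) set" where
  "Mix M \<Gamma> = {T. is_action M T \<and> mixing M \<Gamma> T}"

text \<open>d_G; J is the index set of the (at most countable) family K.\<close>
definition dist_G :: "'a measure \<Rightarrow> (nat \<Rightarrow> 'a set) \<Rightarrow> (nat \<Rightarrow> 'g set) \<Rightarrow> nat set
     \<Rightarrow> ('g \<Rightarrow> 'a \<Rightarrow> 'a) \<Rightarrow> ('g \<Rightarrow> 'a \<Rightarrow> 'a) \<Rightarrow> real" where
  "dist_G M A K J T S = (\<Sum>i. if i \<in> J then (1/2)^(Suc i) * (SUP g\<in>K i. dist_d M A (T g) (S g)) else 0)"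

definition leash :: "'a measure \<Rightarrow> (nat \<Rightarrow> 'a set) \<Rightarrow> (nat \<Rightarrow> 'g set) \<Rightarrow> nat set \<Rightarrow> 'g set
     \<Rightarrow> ('g \<Rightarrow> 'a \<Rightarrow> 'a) \<Rightarrow> ('g \<Rightarrow> 'a \<Rightarrow> 'a) \<Rightarrow> real" where
  "leash M A K J \<Gamma> T S = dist_G M A K J T S + (SUP g\<in>\<Gamma>. dist_a M A (T g) (S g))"

text \<open>s^(n,k); \<open>\<Union>_{i\<le>n} K_i\<close> (1-based) is the union over i \<in> J with i < n (0-based).\<close>
definition dist_s :: "'a measure \<Rightarrow> (nat \<Rightarrow> 'a set) \<Rightarrow> (nat \<Rightarrow> 'g set) \<Rightarrow> nat set \<Rightarrow> 'g set
     \<Rightarrow> nat \<Rightarrow> nat \<Rightarrow> ('g \<Rightarrow> 'a \<Rightarrow> 'a) \<Rightarrow> ('g \<Rightarrow> 'a \<Rightarrow> 'a) \<Rightarrow> real" where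
  "dist_s M A K J \<Gamma> n k T S =
     (SUP g\<in>\<Gamma> \<union> (\<Union>i\<in>{i\<in>J. i < n}. K i). dist_ak M A k (T g) (S g))"

definition s_ball :: "'a measure \<Rightarrow> (nat \<Rightarrow> 'a set) \<Rightarrow> (nat \<Rightarrow> 'g::{topological_space,group_add} set) \<Rightarrow> nat set \<Rightarrow> 'g set
     \<Rightarrow> nat \<Rightarrow> nat \<Rightarrow> ('g \<Rightarrow> 'a \<Rightarrow> 'a) \<Rightarrow> real \<Rightarrow> ('g \<Rightarrow> 'a \<Rightarrow> 'a) set" where
  "s_ball M A K J \<Gamma> n k T \<epsilon> = {S \<in> Mix M \<Gamma>. dist_s M A K J \<Gamma> n k T S < \<epsilon>}"

definition leash_open :: "'a measure \<Rightarrow> (nat \<Rightarrow> 'a set) \<Rightarrow> (nat \<Rightarrow> 'g::{topological_space,group_add} set) \<Rightarrow> nat set \<Rightarrow> 'g set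
     \<Rightarrow> ('g \<Rightarrow> 'a \<Rightarrow> 'a) set \<Rightarrow> bool" where
  "leash_open M A K J \<Gamma> U \<longleftrightarrow> U \<subseteq> Mix M \<Gamma> \<and>
     (\<forall>T\<in>U. \<exists>r>0. \<forall>S\<in>Mix M \<Gamma>. leash M A K J \<Gamma> T S < r \<longrightarrow> S \<in> U)"

end

theory Submission
  imports Defs
begin

text \<open>
  Each s-ball is leash-open: on \<open>\<Gamma>\<close> the pseudometric a_k is dominated by a, and on
  K_1 \<union> ... \<union> K_n by k times d, so s^(n,k) is bounded by a constant multiple of the leash
  metric and the triangle inequality for s^(n,k) applies.

  Conversely every leash ball around S contains an s-ball around S. On \<open>\<Gamma>\<close>, a differs from
  a_k by at most 2^(1-k). On the compact set K_1 \<union> ... \<union> K_n, d has to be recovered from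
  finitely many correlations: by continuity of g \<mapsto> S^g, finitely many sets A_j approximate
  every S^g A_m and (S^g)^(-1) A_m uniformly in g, and a set Y of the same measure whose
  correlations with these A_j are close to those of S^g A_m almost coincides with it.
\<close>

lemma inv_mpt_pre_sets: "inv_mpt M T \<Longrightarrow> X \<in> sets M \<Longrightarrow> pre M T X \<in> sets M"
  unfolding inv_mpt_def pre_def by (auto intro: measurable_sets)

lemma inv_mpt_measure_pre: "inv_mpt M T \<Longrightarrow> X \<in> sets M \<Longrightarrow> measure M (pre M T X) = measure M X"
  unfolding inv_mpt_def pre_def by (metis measure_distr)

lemma inv_mpt_image_eq_pre_inv:
  assumes "inv_mpt M T" "X \<subseteq> space M"
  shows "T ` X = pre M (the_inv_into (space M) T) X"
proof -
  have T: "bij_betw T (space M) (space M)" using assms(1) unfolding inv_mpt_def by auto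
  show ?thesis
    using assms(2) bij_betw_imp_inj_on[OF T] f_the_inv_into_f_bij_betw[OF T]
      bij_betwE[OF T] the_inv_into_f_f[OF bij_betw_imp_inj_on[OF T]]
    unfolding pre_def by (auto simp: image_iff) (metis subsetD)
qed

lemma inv_mpt_image_sets: "inv_mpt M T \<Longrightarrow> X \<in> sets M \<Longrightarrow> T ` X \<in> sets M"
  using inv_mpt_image_eq_pre_inv[of M T X] sets.sets_into_space[of X M]
  unfolding inv_mpt_def pre_def by (auto intro: measurable_sets)

lemma inv_mpt_pre_image: "inv_mpt M T \<Longrightarrow> X \<subseteq> space M \<Longrightarrow> pre M T (T ` X) = X"
  unfolding inv_mpt_def pre_def bij_betw_def inj_on_def by auto

lemma inv_mpt_measure_image: "inv_mpt M T \<Longrightarrow> X \<in> sets M \<Longrightarrow> measure M (T ` X) = measure M X"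
  using inv_mpt_measure_pre[of M T "T ` X"] inv_mpt_image_sets[of M T X]
    inv_mpt_pre_image[of M T X] sets.sets_into_space[of X M] by simp

lemma inv_mpt_measure_pre_Int:
  assumes T: "inv_mpt M T" and "X \<in> sets M" "Z \<in> sets M"
  shows "measure M (pre M T X \<inter> Z) = measure M (T ` Z \<inter> X)"
proof -
  have "T ` (pre M T X \<inter> Z) = T ` Z \<inter> X"
    unfolding pre_def using assms sets.sets_into_space by auto
  moreover have "pre M T X \<inter> Z \<in> sets M" using inv_mpt_pre_sets[OF T] assms by auto
  ultimately show ?thesis using inv_mpt_measure_image[OF T] by metis
qed

lemma Mix_inv_mpt: "S \<in> Mix M \<Gamma> \<Longrightarrow> inv_mpt M (S g)"
  unfolding Mix_def is_action_def by auto

lemma sum_half_powers_le_1: "(\<Sum>i<n. (1/2::real)^Suc i) \<le> 1"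
  using sum_le_suminf[of "\<lambda>i. (1/2::real)^Suc i" "{..<n}"] power_half_series
  by (auto simp: sums_iff)

lemma
  fixes f :: "nat \<Rightarrow> real"
  assumes nonneg: "\<And>i. 0 \<le> f i" and dominated: "\<And>i. f i \<le> b * (1/2)^Suc i"
  shows summable_dominated_half_powers: "summable f"
    and suminf_dominated_half_powers_le: "suminf f \<le> (\<Sum>i<L. f i) + b * (1/2)^L"
proof -
  have half: "summable (\<lambda>i. (1/2::real)^Suc i)" "(\<Sum>i. (1/2::real)^Suc i) = 1"
    using power_half_series by (auto simp: sums_iff)
  show f: "summable f"
    by (rule summable_comparison_test'[OF summable_mult[OF half(1), of b], of 0])
      (use nonneg dominated in auto)
  have "(\<Sum>i. f (i + L)) \<le> (\<Sum>i. b * (1/2)^L * (1/2::real)^Suc i)"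
  proof (rule suminf_le)
    show "f (i + L) \<le> b * (1/2)^L * (1/2)^Suc i" for i
      using dominated[of "i + L"] by (simp add: power_add mult_ac)
  qed (use f summable_ignore_initial_segment summable_mult[OF half(1)] in auto)
  also have "\<dots> = b * (1/2)^L" using suminf_mult[OF half(1)] half(2) by simp
  finally show "suminf f \<le> (\<Sum>i<L. f i) + b * (1/2)^L"
    using suminf_split_initial_segment[OF f, of L] by linarith
qed

lemma double_suminf_truncation:
  fixes f :: "nat \<Rightarrow> nat \<Rightarrow> real"
  assumes nonneg: "\<And>i j. 0 \<le> f i j" and dominated: "\<And>i j. f i j \<le> (1/2)^Suc i * (1/2)^Suc j"
  shows "(\<Sum>i<k. \<Sum>j<k. f i j) \<le> (\<Sum>i. \<Sum>j. f i j)"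
    and "(\<Sum>i. \<Sum>j. f i j) \<le> (\<Sum>i<k. \<Sum>j<k. f i j) + 2 * (1/2)^k"
proof -
  have row: "summable (f i)" "suminf (f i) \<le> (\<Sum>j<L. f i j) + (1/2)^Suc i * (1/2)^L" for i L
    using summable_dominated_half_powers[OF nonneg dominated]
      suminf_dominated_half_powers_le[OF nonneg dominated] by auto
  have row_nonneg: "0 \<le> suminf (f i)" for i using row(1) nonneg by (rule suminf_nonneg)
  have row_le: "suminf (f i) \<le> 1 * (1/2)^Suc i" for i using row(2)[of i 0] by simp
  note rows = summable_dominated_half_powers[OF row_nonneg row_le]
    suminf_dominated_half_powers_le[OF row_nonneg row_le]
  have "(\<Sum>i<k. \<Sum>j<k. f i j) \<le> (\<Sum>i<k. suminf (f i))"
    by (intro sum_mono sum_le_suminf) (use row(1) nonneg in auto)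
  also have "\<dots> \<le> (\<Sum>i. suminf (f i))"
    by (rule sum_le_suminf) (use rows(1) row_nonneg in auto)
  finally show "(\<Sum>i<k. \<Sum>j<k. f i j) \<le> (\<Sum>i. \<Sum>j. f i j)" .
  have "(\<Sum>i<k. suminf (f i)) \<le> (\<Sum>i<k. (\<Sum>j<k. f i j) + (1/2)^Suc i * (1/2)^k)"
    by (intro sum_mono row(2))
  also have "\<dots> = (\<Sum>i<k. \<Sum>j<k. f i j) + (\<Sum>i<k. (1/2::real)^Suc i) * (1/2)^k"
    by (simp add: sum.distrib sum_distrib_right)
  also have "\<dots> \<le> (\<Sum>i<k. \<Sum>j<k. f i j) + (1/2)^k"
    using mult_right_mono[OF sum_half_powers_le_1[of k], of "(1/2)^k"] by simp
  finally show "(\<Sum>i. \<Sum>j. f i j) \<le> (\<Sum>i<k. \<Sum>j<k. f i j) + 2 * (1/2)^k"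
    using rows(2)[of k] by simp
qed

context prob_space
begin

lemma measure_sdiff_eq_Diffs:
  assumes "X \<in> sets M" "Y \<in> sets M"
  shows "measure M (sdiff X Y) = measure M (X - Y) + measure M (Y - X)"
  unfolding sdiff_def using assms by (subst finite_measure_Union) auto

lemma measure_sdiff_eq:
  assumes "X \<in> sets M" "Y \<in> sets M"
  shows "measure M (sdiff X Y) = measure M X + measure M Y - 2 * measure M (X \<inter> Y)"
  using assms by (simp add: measure_sdiff_eq_Diffs finite_measure_Diff' Int_commute)

lemma measure_le_of_subset_Un:
  assumes "Z \<subseteq> X \<union> Y" "X \<in> sets M" "Y \<in> sets M"
  shows "measure M Z \<le> measure M X + measure M Y"
proof -
  have "measure M Z \<le> measure M (X \<union> Y)"
    using assms by (cases "Z \<in> sets M") (auto intro: finite_measure_mono simp: measure_notin_sets)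
  also have "\<dots> \<le> measure M X + measure M Y" using measure_Un_le assms by auto
  finally show ?thesis .
qed

lemma measure_Int_diff_le_sdiff:
  assumes "X \<in> sets M" "Y \<in> sets M" "B \<in> sets M"
  shows "\<bar>measure M (X \<inter> B) - measure M (Y \<inter> B)\<bar> \<le> measure M (sdiff X Y)"
proof -
  have "measure M (X \<inter> B) \<le> measure M (Y \<inter> B) + measure M (X - Y)"
    and "measure M (Y \<inter> B) \<le> measure M (X \<inter> B) + measure M (Y - X)"
    by (rule measure_le_of_subset_Un; use assms in auto)+
  then show ?thesis
    using measure_sdiff_eq_Diffs[OF assms(1,2)] measure_nonneg[of M "X - Y"] measure_nonneg[of M "Y - X"]
    by linarith
qed

section \<open>The pseudometrics\<close>

lemma abs_measure_diff_le_1: "\<bar>measure M X - measure M Y\<bar> \<le> 1"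
  using prob_le_1[of X] prob_le_1[of Y] measure_nonneg[of M X] measure_nonneg[of M Y] by linarith

lemma dist_ak_nonneg: "0 \<le> dist_ak M A k T S"
  unfolding dist_ak_def by (auto intro!: sum_nonneg)

lemma dist_ak_self: "dist_ak M A k T T = 0"
  unfolding dist_ak_def by simp

lemma dist_ak_term_le:
  assumes "i < k" "j < k"
  shows "(1/2)^(Suc i + Suc j) * \<bar>measure M (T ` A i \<inter> A j) - measure M (S ` A i \<inter> A j)\<bar>
    \<le> dist_ak M A k T S"
proof -
  let ?f = "\<lambda>i j. (1/2::real)^(Suc i + Suc j) * \<bar>measure M (T ` A i \<inter> A j) - measure M (S ` A i \<inter> A j)\<bar>"
  have "?f i j \<le> (\<Sum>j<k. ?f i j)" by (rule member_le_sum) (use assms in auto)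
  also have "\<dots> \<le> (\<Sum>i<k. \<Sum>j<k. ?f i j)"
    by (rule member_le_sum[of i "{..<k}" "\<lambda>i. \<Sum>j<k. ?f i j"]) (use assms in \<open>auto intro!: sum_nonneg\<close>)
  finally show ?thesis unfolding dist_ak_def .
qed

lemma dist_ak_small_imp_correlations_close:
  assumes "dist_ak M A k T S < \<delta> * (1/2)^(2*k)" "i < k" "j < k"
  shows "\<bar>measure M (T ` A i \<inter> A j) - measure M (S ` A i \<inter> A j)\<bar> < \<delta>"
proof -
  have "(1/2)^(Suc i + Suc j) * \<bar>measure M (T ` A i \<inter> A j) - measure M (S ` A i \<inter> A j)\<bar>
      < \<delta> * (1/2)^(2*k)"
    using dist_ak_term_le[OF assms(2,3), where T=T and S=S and A=A] assms(1) by linarith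
  also have "\<dots> \<le> \<delta> * (1/2)^(Suc i + Suc j)"
  proof -
    have "0 < \<delta> * (1/2)^(2*k)" using assms(1) dist_ak_nonneg[of A k T S] by linarith
    then show ?thesis using assms by (intro mult_left_mono power_decreasing) (auto simp: zero_less_mult_iff)
  qed
  finally show ?thesis by (simp add: mult.commute)
qed

lemma dist_ak_mono:
  assumes "k \<le> k'"
  shows "dist_ak M A k T S \<le> dist_ak M A k' T S"
proof -
  let ?f = "\<lambda>i j. (1/2::real)^(Suc i + Suc j) * \<bar>measure M (T ` A i \<inter> A j) - measure M (S ` A i \<inter> A j)\<bar>"
  have "(\<Sum>i<k. \<Sum>j<k. ?f i j) \<le> (\<Sum>i<k. \<Sum>j<k'. ?f i j)"
    using assms by (intro sum_mono sum_mono2) auto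
  also have "\<dots> \<le> (\<Sum>i<k'. \<Sum>j<k'. ?f i j)"
    using assms by (intro sum_mono2 sum_nonneg) auto
  finally show ?thesis unfolding dist_ak_def .
qed

lemma dist_ak_triangle: "dist_ak M A k T R \<le> dist_ak M A k T S + dist_ak M A k S R"
  unfolding dist_ak_def sum.distrib[symmetric] distrib_left[symmetric]
  by (intro sum_mono mult_left_mono) auto

lemma
  shows dist_ak_le_dist_a: "dist_ak M A k T S \<le> dist_a M A T S"
    and dist_a_le_dist_ak: "dist_a M A T S \<le> dist_ak M A k T S + 2 * (1/2)^k"
proof -
  define f where "f i j = (1/2::real)^(Suc i + Suc j) * \<bar>measure M (T ` A i \<inter> A j) - measure M (S ` A i \<inter> A j)\<bar>" for i j
  have "0 \<le> f i j" "f i j \<le> (1/2)^Suc i * (1/2)^Suc j" for i j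
    unfolding f_def using abs_measure_diff_le_1 by (auto simp: power_add mult_left_le)
  note truncation = double_suminf_truncation[of f, OF this]
  show "dist_ak M A k T S \<le> dist_a M A T S" "dist_a M A T S \<le> dist_ak M A k T S + 2 * (1/2)^k"
    unfolding dist_ak_def dist_a_def f_def[symmetric] using truncation by auto
qed

lemma
  fixes T S :: "'a \<Rightarrow> 'a" and A :: "nat \<Rightarrow> 'a set"
  defines "e \<equiv> \<lambda>m. (1/2::real)^(Suc m) * (measure M (sdiff (T ` A m) (S ` A m))
      + measure M (sdiff (pre M T (A m)) (pre M S (A m))))"
  shows dist_d_nonneg: "0 \<le> dist_d M A T S"
    and dist_d_term_le: "e m \<le> dist_d M A T S"
    and dist_d_le_initial_sum: "dist_d M A T S \<le> (\<Sum>m<L. e m) + 2 * (1/2)^L"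
proof -
  have nonneg: "0 \<le> e m" for m unfolding e_def by simp
  have "e m \<le> (1/2)^Suc m * 2" for m
    unfolding e_def using add_mono[OF prob_le_1 prob_le_1] by (intro mult_left_mono) auto
  then have "e m \<le> 2 * (1/2)^Suc m" for m by (simp add: mult.commute)
  note series = summable_dominated_half_powers[OF nonneg this]
    suminf_dominated_half_powers_le[OF nonneg this]
  have dist_d: "dist_d M A T S = suminf e" unfolding dist_d_def e_def ..
  show "0 \<le> dist_d M A T S" unfolding dist_d using series(1) nonneg by (rule suminf_nonneg)
  show "e m \<le> dist_d M A T S"
    unfolding dist_d using sum_le_suminf[OF series(1), of "{m}"] nonneg by auto
  show "dist_d M A T S \<le> (\<Sum>m<L. e m) + 2 * (1/2)^L" unfolding dist_d by (rule series(2))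
qed

lemma dist_d_le_2: "dist_d M A T S \<le> 2"
  using dist_d_le_initial_sum[where L=0] by simp

lemma dist_d_le_of_terms:
  assumes terms: "\<And>m. m < L \<Longrightarrow> measure M (sdiff (T ` A m) (S ` A m))
      + measure M (sdiff (pre M T (A m)) (pre M S (A m))) \<le> \<eta>"
    and "0 \<le> \<eta>"
  shows "dist_d M A T S \<le> \<eta> + 2 * (1/2)^L"
proof -
  have "(\<Sum>m<L. (1/2::real)^(Suc m) * (measure M (sdiff (T ` A m) (S ` A m))
      + measure M (sdiff (pre M T (A m)) (pre M S (A m))))) \<le> (\<Sum>m<L. (1/2)^Suc m) * \<eta>"
    unfolding sum_distrib_right by (intro sum_mono mult_left_mono terms) auto
  also have "\<dots> \<le> \<eta>"
    using mult_right_mono[OF sum_half_powers_le_1 \<open>0 \<le> \<eta>\<close>] by simp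
  finally show ?thesis using dist_d_le_initial_sum[where T=T and S=S and A=A and L=L] by linarith
qed

lemma dist_ak_le_dist_d:
  assumes R: "inv_mpt M R" and Q: "inv_mpt M Q" and A: "\<And>i. A i \<in> sets M"
  shows "dist_ak M A k R Q \<le> real k * dist_d M A R Q"
proof -
  have bound: "(1/2)^(Suc i + Suc j) * \<bar>measure M (R ` A i \<inter> A j) - measure M (Q ` A i \<inter> A j)\<bar>
      \<le> (1/2)^Suc j * dist_d M A R Q" for i j
  proof -
    let ?x = "\<bar>measure M (R ` A i \<inter> A j) - measure M (Q ` A i \<inter> A j)\<bar>"
    let ?y = "measure M (sdiff (R ` A i) (Q ` A i))"
    have "?x \<le> ?y"
      using inv_mpt_image_sets[OF R A] inv_mpt_image_sets[OF Q A] A by (rule measure_Int_diff_le_sdiff)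
    then have "(1/2)^Suc i * ?x \<le> (1/2)^Suc i * ?y" by (rule mult_left_mono) simp
    also have "\<dots> \<le> dist_d M A R Q"
      using dist_d_term_le[where T=R and S=Q and A=A and m=i]
        mult_nonneg_nonneg[OF zero_le_power measure_nonneg, of "1/2::real" "Suc i" M
          "sdiff (pre M R (A i)) (pre M Q (A i))"]
      unfolding distrib_left by linarith
    finally have "(1/2)^Suc i * ?x \<le> dist_d M A R Q" .
    then have "(1/2)^Suc j * ((1/2)^Suc i * ?x) \<le> (1/2)^Suc j * dist_d M A R Q"
      by (rule mult_left_mono) simp
    then show ?thesis by (simp add: power_add mult_ac)
  qed
  have "dist_ak M A k R Q \<le> (\<Sum>i<k. (\<Sum>j<k. (1/2)^Suc j) * dist_d M A R Q)"
    unfolding dist_ak_def sum_distrib_right by (intro sum_mono bound)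
  also have "\<dots> \<le> (\<Sum>i<k. dist_d M A R Q)"
    using mult_right_mono[OF sum_half_powers_le_1 dist_d_nonneg] by (intro sum_mono) simp
  finally show ?thesis by simp
qed

lemma
  fixes K :: "nat \<Rightarrow> 'g set"
  assumes K_nonempty: "\<forall>i\<in>J. K i \<noteq> {}"
  shows dist_G_nonneg: "0 \<le> dist_G M A K J T S"
    and dist_d_le_dist_G: "i \<in> J \<Longrightarrow> g \<in> K i \<Longrightarrow> dist_d M A (T g) (S g) \<le> 2^Suc i * dist_G M A K J T S"
    and dist_G_le: "(\<And>i g. i \<in> J \<Longrightarrow> i < n \<Longrightarrow> g \<in> K i \<Longrightarrow> dist_d M A (T g) (S g) \<le> \<delta>) \<Longrightarrow> 0 \<le> \<delta>
      \<Longrightarrow> dist_G M A K J T S \<le> \<delta> + 2 * (1/2)^n"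
proof -
  define t where "t i = (if i \<in> J then (1/2::real)^(Suc i) * (SUP g\<in>K i. dist_d M A (T g) (S g)) else 0)" for i
  have bdd: "bdd_above ((\<lambda>g. dist_d M A (T g) (S g)) ` K i)" for i
    using dist_d_le_2 by (auto intro!: bdd_aboveI)
  have SUP_ge: "dist_d M A (T g) (S g) \<le> (SUP g\<in>K i. dist_d M A (T g) (S g))" if "g \<in> K i" for i g
    by (rule cSUP_upper[OF that bdd])
  have SUP_le: "(SUP g\<in>K i. dist_d M A (T g) (S g)) \<le> b"
    if "i \<in> J" "\<And>g. g \<in> K i \<Longrightarrow> dist_d M A (T g) (S g) \<le> b" for i b
    by (rule cSUP_least) (use K_nonempty that in auto)
  have t_nonneg: "0 \<le> t i" for i
  proof (cases "i \<in> J")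
    case True
    then obtain g where "g \<in> K i" using K_nonempty by auto
    then have "0 \<le> (SUP g\<in>K i. dist_d M A (T g) (S g))"
      using SUP_ge dist_d_nonneg order_trans by metis
    then show ?thesis unfolding t_def by simp
  qed (simp add: t_def)
  have "t i \<le> 2 * (1/2)^Suc i" for i
  proof (cases "i \<in> J")
    case True
    then have "(SUP g\<in>K i. dist_d M A (T g) (S g)) \<le> 2" using SUP_le dist_d_le_2 by blast
    then show ?thesis unfolding t_def using True by (simp add: mult.commute)
  qed (simp add: t_def)
  note series = summable_dominated_half_powers[OF t_nonneg this]
    suminf_dominated_half_powers_le[OF t_nonneg this]
  have dist_G: "dist_G M A K J T S = suminf t" unfolding dist_G_def t_def ..
  show "0 \<le> dist_G M A K J T S" unfolding dist_G using series(1) t_nonneg by (rule suminf_nonneg)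
  show "dist_d M A (T g) (S g) \<le> 2^Suc i * dist_G M A K J T S" if "i \<in> J" "g \<in> K i"
  proof -
    have "(1/2)^Suc i * dist_d M A (T g) (S g) \<le> t i"
      unfolding t_def using that SUP_ge by (auto intro: mult_left_mono)
    also have "\<dots> \<le> dist_G M A K J T S"
      unfolding dist_G using sum_le_suminf[OF series(1), of "{i}"] t_nonneg by auto
    finally show ?thesis by (simp add: field_simps)
  qed
  assume small: "\<And>i g. i \<in> J \<Longrightarrow> i < n \<Longrightarrow> g \<in> K i \<Longrightarrow> dist_d M A (T g) (S g) \<le> \<delta>" and "0 \<le> \<delta>"
  have "t i \<le> (1/2)^Suc i * \<delta>" if "i < n" for i
  proof (cases "i \<in> J")
    case True
    then have "(SUP g\<in>K i. dist_d M A (T g) (S g)) \<le> \<delta>" using SUP_le small \<open>i < n\<close> by blast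
    then show ?thesis unfolding t_def using True by simp
  qed (simp add: t_def \<open>0 \<le> \<delta>\<close>)
  then have "(\<Sum>i<n. t i) \<le> (\<Sum>i<n. (1/2)^Suc i) * \<delta>"
    unfolding sum_distrib_right by (intro sum_mono) auto
  also have "\<dots> \<le> \<delta>" using mult_right_mono[OF sum_half_powers_le_1 \<open>0 \<le> \<delta>\<close>] by simp
  finally show "dist_G M A K J T S \<le> \<delta> + 2 * (1/2)^n" unfolding dist_G using series(2)[of n] by simp
qed

lemma
  shows dist_a_nonneg: "0 \<le> dist_a M A T S"
    and dist_a_le_2: "dist_a M A T S \<le> 2"
  using dist_ak_le_dist_a[of A 0] dist_a_le_dist_ak[of A T S 0] by (simp_all add: dist_ak_def)

lemma
  fixes K :: "nat \<Rightarrow> 'g set"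
  assumes K_nonempty: "\<forall>i\<in>J. K i \<noteq> {}" and \<Gamma>_nonempty: "\<Gamma> \<noteq> {}"
  shows dist_G_le_leash: "dist_G M A K J T S \<le> leash M A K J \<Gamma> T S"
    and dist_a_le_leash: "g \<in> \<Gamma> \<Longrightarrow> dist_a M A (T g) (S g) \<le> leash M A K J \<Gamma> T S"
    and leash_nonneg: "0 \<le> leash M A K J \<Gamma> T S"
    and leash_le: "(\<And>g. g \<in> \<Gamma> \<Longrightarrow> dist_a M A (T g) (S g) \<le> b)
      \<Longrightarrow> leash M A K J \<Gamma> T S \<le> dist_G M A K J T S + b"
proof -
  have bdd: "bdd_above ((\<lambda>g. dist_a M A (T g) (S g)) ` \<Gamma>)"
    using dist_a_le_2 by (auto intro!: bdd_aboveI)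
  obtain g0 where "g0 \<in> \<Gamma>" using \<Gamma>_nonempty by auto
  then have SUP_nonneg: "0 \<le> (SUP g\<in>\<Gamma>. dist_a M A (T g) (S g))"
    using cSUP_upper[OF _ bdd, of g0] dist_a_nonneg[of A "T g0" "S g0"] by linarith
  note dist_G_nonneg[OF K_nonempty, of A T S]
  then show "dist_G M A K J T S \<le> leash M A K J \<Gamma> T S" "0 \<le> leash M A K J \<Gamma> T S"
    unfolding leash_def using SUP_nonneg by simp_all
  show "g \<in> \<Gamma> \<Longrightarrow> dist_a M A (T g) (S g) \<le> leash M A K J \<Gamma> T S"
    unfolding leash_def using cSUP_upper[OF _ bdd, of g] \<open>0 \<le> dist_G M A K J T S\<close> by simp
  show "(\<And>g. g \<in> \<Gamma> \<Longrightarrow> dist_a M A (T g) (S g) \<le> b) \<Longrightarrow> leash M A K J \<Gamma> T S \<le> dist_G M A K J T S + b"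
    unfolding leash_def using cSUP_least[OF \<Gamma>_nonempty, of "\<lambda>g. dist_a M A (T g) (S g)" b] by simp
qed

lemma
  fixes K :: "nat \<Rightarrow> 'g set"
  assumes \<Gamma>_nonempty: "\<Gamma> \<noteq> {}"
  shows dist_ak_le_dist_s: "g \<in> \<Gamma> \<union> (\<Union>i\<in>{i\<in>J. i < n}. K i)
      \<Longrightarrow> dist_ak M A k (T g) (S g) \<le> dist_s M A K J \<Gamma> n k T S"
    and dist_s_le: "(\<And>g. g \<in> \<Gamma> \<union> (\<Union>i\<in>{i\<in>J. i < n}. K i) \<Longrightarrow> dist_ak M A k (T g) (S g) \<le> b)
      \<Longrightarrow> dist_s M A K J \<Gamma> n k T S \<le> b"
proof -
  have bdd: "bdd_above ((\<lambda>g. dist_ak M A k (T g) (S g)) ` (\<Gamma> \<union> (\<Union>i\<in>{i\<in>J. i < n}. K i)))"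
    by (rule bdd_aboveI[where M=2]) (use dist_ak_le_dist_a dist_a_le_2 order_trans in blast)
  show "dist_ak M A k (T g) (S g) \<le> dist_s M A K J \<Gamma> n k T S"
    if "g \<in> \<Gamma> \<union> (\<Union>i\<in>{i\<in>J. i < n}. K i)"
    unfolding dist_s_def by (rule cSUP_upper[OF that bdd])
  show "(\<And>g. g \<in> \<Gamma> \<union> (\<Union>i\<in>{i\<in>J. i < n}. K i) \<Longrightarrow> dist_ak M A k (T g) (S g) \<le> b)
      \<Longrightarrow> dist_s M A K J \<Gamma> n k T S \<le> b"
    unfolding dist_s_def using \<Gamma>_nonempty by (intro cSUP_least) auto
qed

lemma dist_s_self: "\<Gamma> \<noteq> {} \<Longrightarrow> dist_s M A K J \<Gamma> n k T T = 0"
  unfolding dist_s_def dist_ak_self by simp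

lemma dist_s_triangle:
  "\<Gamma> \<noteq> {} \<Longrightarrow> dist_s M A K J \<Gamma> n k T R \<le> dist_s M A K J \<Gamma> n k T S + dist_s M A K J \<Gamma> n k S R"
  by (rule dist_s_le, assumption, rule order_trans[OF dist_ak_triangle],
      intro add_mono; rule dist_ak_le_dist_s)

section \<open>The s-balls are leash-open\<close>

lemma dist_s_le_leash:
  fixes K :: "nat \<Rightarrow> 'g set"
  assumes A: "\<And>i. A i \<in> sets M"
    and K_nonempty: "\<forall>i\<in>J. K i \<noteq> {}" and \<Gamma>_nonempty: "\<Gamma> \<noteq> {}"
    and S: "\<And>g. inv_mpt M (S g)" and R: "\<And>g. inv_mpt M (R g)"
  shows "dist_s M A K J \<Gamma> n k S R \<le> (real k * 2^n + 1) * leash M A K J \<Gamma> S R"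
proof (rule dist_s_le[OF \<Gamma>_nonempty])
  let ?l = "leash M A K J \<Gamma> S R"
  have l_nonneg: "0 \<le> ?l" by (rule leash_nonneg[OF K_nonempty \<Gamma>_nonempty])
  fix g assume "g \<in> \<Gamma> \<union> (\<Union>i\<in>{i\<in>J. i < n}. K i)"
  then consider "g \<in> \<Gamma>" | i where "i \<in> J" "i < n" "g \<in> K i" by auto
  then show "dist_ak M A k (S g) (R g) \<le> (real k * 2^n + 1) * ?l"
  proof cases
    case 1
    have "dist_ak M A k (S g) (R g) \<le> dist_a M A (S g) (R g)" by (rule dist_ak_le_dist_a)
    also have "\<dots> \<le> ?l" by (rule dist_a_le_leash[OF K_nonempty \<Gamma>_nonempty 1])
    also have "\<dots> \<le> (real k * 2^n + 1) * ?l" using l_nonneg by (simp add: algebra_simps)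
    finally show ?thesis .
  next
    case 2
    have "dist_d M A (S g) (R g) \<le> 2^Suc i * dist_G M A K J S R"
      by (rule dist_d_le_dist_G[OF K_nonempty 2(1,3)])
    also have "\<dots> \<le> 2^n * ?l"
      using 2(2) dist_G_le_leash[OF K_nonempty \<Gamma>_nonempty, of A S R] dist_G_nonneg[OF K_nonempty, of A S R]
      by (intro mult_mono power_increasing) auto
    finally have "real k * dist_d M A (S g) (R g) \<le> real k * (2^n * ?l)"
      by (rule mult_left_mono) simp
    moreover have "dist_ak M A k (S g) (R g) \<le> real k * dist_d M A (S g) (R g)"
      by (rule dist_ak_le_dist_d[OF S R A])
    ultimately show ?thesis using l_nonneg by (simp add: algebra_simps)
  qed
qed

lemma s_ball_leash_open:
  fixes K :: "nat \<Rightarrow> 'g::{topological_space,group_add} set"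
  assumes A: "\<And>i. A i \<in> sets M"
    and K_nonempty: "\<forall>i\<in>J. K i \<noteq> {}" and \<Gamma>_nonempty: "\<Gamma> \<noteq> {}"
  shows "leash_open M A K J \<Gamma> (s_ball M A K J \<Gamma> n k T \<epsilon>)"
  unfolding leash_open_def
proof (intro conjI ballI)
  show "s_ball M A K J \<Gamma> n k T \<epsilon> \<subseteq> Mix M \<Gamma>" by (auto simp: s_ball_def)
  fix S assume S: "S \<in> s_ball M A K J \<Gamma> n k T \<epsilon>"
  let ?s = "dist_s M A K J \<Gamma> n k"
  define c where "c = real k * 2^n + 1"
  have "0 < c" unfolding c_def by (simp add: add_nonneg_pos)
  show "\<exists>r>0. \<forall>R\<in>Mix M \<Gamma>. leash M A K J \<Gamma> S R < r \<longrightarrow> R \<in> s_ball M A K J \<Gamma> n k T \<epsilon>"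
  proof (intro exI[of _ "(\<epsilon> - ?s T S) / c"] conjI ballI impI)
    show "0 < (\<epsilon> - ?s T S) / c" using S \<open>0 < c\<close> by (simp add: s_ball_def)
    fix R assume R: "R \<in> Mix M \<Gamma>" and close: "leash M A K J \<Gamma> S R < (\<epsilon> - ?s T S) / c"
    have "?s T R \<le> ?s T S + ?s S R" by (rule dist_s_triangle[OF \<Gamma>_nonempty])
    also have "?s S R \<le> c * leash M A K J \<Gamma> S R"
      unfolding c_def using S R
      by (intro dist_s_le_leash[OF A K_nonempty \<Gamma>_nonempty]) (auto simp: s_ball_def Mix_inv_mpt)
    also have "c * leash M A K J \<Gamma> S R < \<epsilon> - ?s T S"
      using close \<open>0 < c\<close> by (simp add: pos_less_divide_eq mult.commute)
    finally show "R \<in> s_ball M A K J \<Gamma> n k T \<epsilon>" using R by (simp add: s_ball_def)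
  qed
qed

section \<open>Every leash ball contains an s-ball\<close>

lemma uniform_sdiff_small_of_correlations_close:
  fixes X :: "'g::topological_space \<Rightarrow> 'a set" and A :: "nat \<Rightarrow> 'a set"
  assumes X: "\<And>g. X g \<in> sets M" and X_measure: "\<And>g. measure M (X g) = c"
    and X_continuous: "\<And>g0. continuous_on UNIV (\<lambda>g. measure M (X g \<inter> X g0))"
    and "compact C" and A: "\<And>i. A i \<in> sets M"
    and A_dense: "\<forall>Z\<in>sets M. \<forall>e>0. \<exists>i. measure M (sdiff (A i) Z) < e"
    and "\<delta> > 0"
  shows "\<exists>k. \<forall>g\<in>C. \<forall>Y\<in>sets M. measure M Y = c \<longrightarrow>
     (\<forall>j<k. \<bar>measure M (Y \<inter> A j) - measure M (X g \<inter> A j)\<bar> < \<delta>) \<longrightarrow>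
     measure M (sdiff (X g) Y) < 6 * \<delta>"
proof -
  have "\<forall>g0. \<exists>i. measure M (sdiff (A i) (X g0)) < \<delta>" using A_dense X \<open>\<delta> > 0\<close> by blast
  then obtain approx where approx: "\<And>g0. measure M (sdiff (A (approx g0)) (X g0)) < \<delta>"
    by metis
  \<comment> \<open>For g near g0 the set X g almost equals X g0, so the single set A (approx g0) already
      approximates X g, and the correlation of Y with it pins down the measure of X g \<inter> Y.\<close>
  define V where "V g0 = {g. c - \<delta>/2 < measure M (X g \<inter> X g0)}" for g0
  have "open (V g0)" for g0
    unfolding V_def by (rule open_Collect_less) (use X_continuous in auto)
  moreover have "C \<subseteq> (\<Union>g0\<in>C. V g0)"
    unfolding V_def using X_measure \<open>\<delta> > 0\<close> by (auto simp: Int_absorb)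
  ultimately obtain D where D: "finite D" "C \<subseteq> (\<Union>g0\<in>D. V g0)"
    using compactE_image[OF \<open>compact C\<close>] by metis
  show ?thesis
  proof (intro exI[of _ "Suc (\<Sum>g0\<in>D. approx g0)"] ballI impI)
    fix g Y assume "g \<in> C" and Y: "Y \<in> sets M" "measure M Y = c"
      and close: "\<forall>j<Suc (\<Sum>g0\<in>D. approx g0). \<bar>measure M (Y \<inter> A j) - measure M (X g \<inter> A j)\<bar> < \<delta>"
    obtain g0 where g0: "g0 \<in> D" "g \<in> V g0" using D(2) \<open>g \<in> C\<close> by auto
    define j where "j = approx g0"
    have "j < Suc (\<Sum>g0\<in>D. approx g0)" unfolding j_def using member_le_sum[OF g0(1), of approx] D(1) by simp
    then have "\<bar>measure M (Y \<inter> A j) - measure M (X g \<inter> A j)\<bar> < \<delta>" using close by auto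
    moreover have "c - \<delta>/2 < measure M (X g \<inter> X g0)" using g0(2) by (simp add: V_def)
    moreover have "measure M (Y \<inter> A j) \<le> measure M (X g \<inter> Y) + measure M (A j - X g)"
      and "measure M (X g \<inter> X g0) \<le> measure M (X g \<inter> A j) + measure M (X g0 - A j)"
      and "measure M (A j - X g) \<le> measure M (A j - X g0) + measure M (X g0 - X g)"
      by (rule measure_le_of_subset_Un; use X Y A in auto)+
    moreover have "measure M (X g0 - X g) = c - measure M (X g \<inter> X g0)"
      using finite_measure_Diff'[of "X g0" "X g"] X X_measure by (simp add: Int_commute)
    moreover have "measure M (A j - X g0) + measure M (X g0 - A j) < \<delta>"
      using approx[of g0] measure_sdiff_eq_Diffs[of "A j" "X g0"] X A unfolding j_def by simp
    moreover have "measure M (sdiff (X g) Y) = c + c - 2 * measure M (X g \<inter> Y)"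
      using measure_sdiff_eq[of "X g" Y] X Y X_measure by simp
    ultimately show "measure M (sdiff (X g) Y) < 6 * \<delta>" by linarith
  qed
qed

lemma action_sdiff_small_of_correlations_close:
  fixes S :: "'g::{topological_space,group_add} \<Rightarrow> 'a \<Rightarrow> 'a" and A :: "nat \<Rightarrow> 'a set"
  assumes A: "\<And>i. A i \<in> sets M" and A_dense: "\<forall>Z\<in>sets M. \<forall>e>0. \<exists>i. measure M (sdiff (A i) Z) < e"
    and S: "is_action M S" and C: "compact C" and "\<delta> > 0"
  shows "\<exists>k. \<forall>g\<in>C. \<forall>R. inv_mpt M R \<longrightarrow>
    (\<forall>i<k. \<forall>j<k. \<bar>measure M (S g ` A i \<inter> A j) - measure M (R ` A i \<inter> A j)\<bar> < \<delta>) \<longrightarrow>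
    measure M (sdiff (S g ` A m) (R ` A m)) + measure M (sdiff (pre M (S g) (A m)) (pre M R (A m))) < 12 * \<delta>"
proof -
  have S_inv: "inv_mpt M (S g)" for g using S by (simp add: is_action_def)
  have S_cont: "continuous_on UNIV (\<lambda>g. measure M (S g ` X \<inter> B))" if "X \<in> sets M" "B \<in> sets M" for X B
    using S that by (simp add: is_action_def)
  have img_cont: "continuous_on UNIV (\<lambda>g. measure M (S g ` A m \<inter> S g0 ` A m))" for g0
    using S_cont[OF A inv_mpt_image_sets[OF S_inv A]] .
  have pre_cont: "continuous_on UNIV (\<lambda>g. measure M (pre M (S g) (A m) \<inter> pre M (S g0) (A m)))" for g0
    using S_cont[OF inv_mpt_pre_sets[OF S_inv A] A]
    by (simp add: inv_mpt_measure_pre_Int[OF S_inv A inv_mpt_pre_sets[OF S_inv A]])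
  have "\<exists>k. \<forall>g\<in>C. \<forall>Y\<in>sets M. measure M Y = measure M (A m) \<longrightarrow>
     (\<forall>j<k. \<bar>measure M (Y \<inter> A j) - measure M (S g ` A m \<inter> A j)\<bar> < \<delta>) \<longrightarrow>
     measure M (sdiff (S g ` A m) Y) < 6 * \<delta>"
    using inv_mpt_image_sets[OF S_inv A] inv_mpt_measure_image[OF S_inv A] A
    by (intro uniform_sdiff_small_of_correlations_close[OF _ _ img_cont C A A_dense \<open>\<delta> > 0\<close>]) auto
  then obtain k_img where k_img: "\<forall>g\<in>C. \<forall>Y\<in>sets M. measure M Y = measure M (A m) \<longrightarrow>
     (\<forall>j<k_img. \<bar>measure M (Y \<inter> A j) - measure M (S g ` A m \<inter> A j)\<bar> < \<delta>) \<longrightarrow>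
     measure M (sdiff (S g ` A m) Y) < 6 * \<delta>"
    by blast
  have "\<exists>k. \<forall>g\<in>C. \<forall>Y\<in>sets M. measure M Y = measure M (A m) \<longrightarrow>
     (\<forall>j<k. \<bar>measure M (Y \<inter> A j) - measure M (pre M (S g) (A m) \<inter> A j)\<bar> < \<delta>) \<longrightarrow>
     measure M (sdiff (pre M (S g) (A m)) Y) < 6 * \<delta>"
    using inv_mpt_pre_sets[OF S_inv A] inv_mpt_measure_pre[OF S_inv A] A
    by (intro uniform_sdiff_small_of_correlations_close[OF _ _ pre_cont C A A_dense \<open>\<delta> > 0\<close>]) auto
  then obtain k_pre where k_pre: "\<forall>g\<in>C. \<forall>Y\<in>sets M. measure M Y = measure M (A m) \<longrightarrow>
     (\<forall>j<k_pre. \<bar>measure M (Y \<inter> A j) - measure M (pre M (S g) (A m) \<inter> A j)\<bar> < \<delta>) \<longrightarrow>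
     measure M (sdiff (pre M (S g) (A m)) Y) < 6 * \<delta>"
    by blast
  show ?thesis
  proof (intro exI[of _ "Suc (m + k_img + k_pre)"] ballI allI impI)
    fix g R assume "g \<in> C" and R: "inv_mpt M R"
      and close: "\<forall>i<Suc (m + k_img + k_pre). \<forall>j<Suc (m + k_img + k_pre).
        \<bar>measure M (S g ` A i \<inter> A j) - measure M (R ` A i \<inter> A j)\<bar> < \<delta>"
    have "\<forall>j<k_img. \<bar>measure M (R ` A m \<inter> A j) - measure M (S g ` A m \<inter> A j)\<bar> < \<delta>"
      using close by (simp add: abs_minus_commute)
    then have "measure M (sdiff (S g ` A m) (R ` A m)) < 6 * \<delta>"
      using k_img[rule_format, OF \<open>g \<in> C\<close> inv_mpt_image_sets[OF R A] inv_mpt_measure_image[OF R A]]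
      by blast
    moreover have "\<forall>j<k_pre. \<bar>measure M (pre M R (A m) \<inter> A j) - measure M (pre M (S g) (A m) \<inter> A j)\<bar> < \<delta>"
      using close
      by (simp add: inv_mpt_measure_pre_Int[OF R A A] inv_mpt_measure_pre_Int[OF S_inv A A] abs_minus_commute)
    then have "measure M (sdiff (pre M (S g) (A m)) (pre M R (A m))) < 6 * \<delta>"
      using k_pre[rule_format, OF \<open>g \<in> C\<close> inv_mpt_pre_sets[OF R A] inv_mpt_measure_pre[OF R A]]
      by blast
    ultimately show "measure M (sdiff (S g ` A m) (R ` A m))
        + measure M (sdiff (pre M (S g) (A m)) (pre M R (A m))) < 12 * \<delta>" by simp
  qed
qed

lemma action_dist_d_uniformly_controlled_by_dist_ak:
  fixes S :: "'g::{topological_space,group_add} \<Rightarrow> 'a \<Rightarrow> 'a"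
  assumes A: "\<And>i. A i \<in> sets M" and A_dense: "\<forall>Z\<in>sets M. \<forall>e>0. \<exists>i. measure M (sdiff (A i) Z) < e"
    and S: "is_action M S" and C: "compact C" and "\<eta> > 0"
  shows "\<exists>k. \<exists>\<delta>>0. \<forall>g\<in>C. \<forall>R. inv_mpt M R \<longrightarrow> dist_ak M A k (S g) R < \<delta> \<longrightarrow> dist_d M A (S g) R \<le> \<eta>"
proof -
  obtain L where L: "(1/2::real)^L < \<eta>/4" using real_arch_pow_inv[of "\<eta>/4" "1/2::real"] \<open>\<eta> > 0\<close> by auto
  have "\<eta> / 24 > 0" using \<open>\<eta> > 0\<close> by simp
  obtain k_of where k_of: "\<And>m. \<forall>g\<in>C. \<forall>R. inv_mpt M R \<longrightarrow>
    (\<forall>i<k_of m. \<forall>j<k_of m. \<bar>measure M (S g ` A i \<inter> A j) - measure M (R ` A i \<inter> A j)\<bar> < \<eta> / 24) \<longrightarrow>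
    measure M (sdiff (S g ` A m) (R ` A m)) + measure M (sdiff (pre M (S g) (A m)) (pre M R (A m))) < 12 * (\<eta> / 24)"
    using action_sdiff_small_of_correlations_close[OF A A_dense S C \<open>\<eta> / 24 > 0\<close>] by metis
  define k where "k = (\<Sum>m<L. k_of m)"
  have k_of_le: "k_of m \<le> k" if "m < L" for m
    using member_le_sum[of m "{..<L}" k_of] that unfolding k_def by simp
  show ?thesis
  proof (intro exI[of _ k] exI[of _ "\<eta> / 24 * (1/2)^(2*k)"] conjI ballI allI impI)
    show "0 < \<eta> / 24 * (1/2)^(2*k)" using \<open>\<eta> > 0\<close> by simp
    fix g R assume "g \<in> C" and R: "inv_mpt M R" and small: "dist_ak M A k (S g) R < \<eta> / 24 * (1/2)^(2*k)"
    have "measure M (sdiff (S g ` A m) (R ` A m)) + measure M (sdiff (pre M (S g) (A m)) (pre M R (A m)))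
        \<le> \<eta> / 2" if "m < L" for m
      using k_of[of m, rule_format, OF \<open>g \<in> C\<close> R] k_of_le[OF that]
        dist_ak_small_imp_correlations_close[OF small] by fastforce
    then have "dist_d M A (S g) R \<le> \<eta> / 2 + 2 * (1/2)^L"
      using \<open>\<eta> > 0\<close> by (intro dist_d_le_of_terms) auto
    then show "dist_d M A (S g) R \<le> \<eta>" using L by simp
  qed
qed

lemma leash_ball_contains_s_ball:
  fixes K :: "nat \<Rightarrow> 'g::{topological_space,group_add} set"
  assumes A: "\<And>i. A i \<in> sets M" and A_dense: "\<forall>Z\<in>sets M. \<forall>e>0. \<exists>i. measure M (sdiff (A i) Z) < e"
    and K_compact: "\<forall>i\<in>J. compact (K i)" and K_nonempty: "\<forall>i\<in>J. K i \<noteq> {}"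
    and \<Gamma>_nonempty: "\<Gamma> \<noteq> {}" and S: "S \<in> Mix M \<Gamma>" and "r > 0"
  shows "\<exists>n\<ge>1. \<exists>k\<ge>1. \<exists>\<epsilon>>0. \<forall>R\<in>Mix M \<Gamma>.
    dist_s M A K J \<Gamma> n k S R < \<epsilon> \<longrightarrow> leash M A K J \<Gamma> S R < r"
proof -
  obtain N where N: "(1/2::real)^N < r/16" using real_arch_pow_inv[of "r/16" "1/2::real"] \<open>r > 0\<close> by auto
  have tail: "2 * (1/2::real)^x \<le> r/8" if "N \<le> x" for x
  proof -
    have "(1/2::real)^x \<le> (1/2)^N" by (rule power_decreasing[OF that]) auto
    then show ?thesis using N by linarith
  qed
  define n where "n = Suc N"
  have "compact (\<Union>i\<in>{i\<in>J. i < n}. K i)" using K_compact by (intro compact_UN) auto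
  then obtain k0 \<delta> where "\<delta> > 0" and controlled: "\<And>g R. g \<in> (\<Union>i\<in>{i\<in>J. i < n}. K i) \<Longrightarrow> inv_mpt M R
      \<Longrightarrow> dist_ak M A k0 (S g) R < \<delta> \<Longrightarrow> dist_d M A (S g) R \<le> r/4"
    using action_dist_d_uniformly_controlled_by_dist_ak[OF A A_dense _ _ divide_pos_pos[OF \<open>r > 0\<close>]]
      S unfolding Mix_def by (metis (no_types, lifting) mem_Collect_eq zero_less_numeral)
  define k where "k = max k0 n"
  have "\<forall>R\<in>Mix M \<Gamma>. dist_s M A K J \<Gamma> n k S R < min \<delta> (r/8) \<longrightarrow> leash M A K J \<Gamma> S R < r"
  proof (intro ballI impI)
    fix R assume R: "R \<in> Mix M \<Gamma>" and small: "dist_s M A K J \<Gamma> n k S R < min \<delta> (r/8)"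
    have dist_ak_small: "dist_ak M A k (S g) (R g) < min \<delta> (r/8)"
      if "g \<in> \<Gamma> \<union> (\<Union>i\<in>{i\<in>J. i < n}. K i)" for g
      using dist_ak_le_dist_s[OF \<Gamma>_nonempty that, where A=A and k=k and T=S and S=R] small by linarith
    have "dist_G M A K J S R \<le> r/4 + 2 * (1/2)^n"
    proof (rule dist_G_le[OF K_nonempty])
      fix i g assume "i \<in> J" "i < n" "g \<in> K i"
      then have g: "g \<in> (\<Union>i\<in>{i\<in>J. i < n}. K i)" by auto
      have "dist_ak M A k0 (S g) (R g) \<le> dist_ak M A k (S g) (R g)"
        by (rule dist_ak_mono) (simp add: k_def)
      also have "\<dots> < \<delta>" using dist_ak_small[of g] g by simp
      finally show "dist_d M A (S g) (R g) \<le> r/4"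
        by (rule controlled[OF g Mix_inv_mpt[OF R]])
    qed (use \<open>r > 0\<close> in simp)
    moreover have "dist_a M A (S g) (R g) \<le> r/4" if "g \<in> \<Gamma>" for g
    proof -
      have "2 * (1/2)^k \<le> r/8" by (rule tail) (simp add: k_def n_def)
      then show ?thesis
        using dist_a_le_dist_ak[of A "S g" "R g" k] dist_ak_small[of g] that by simp
    qed
    ultimately have "leash M A K J \<Gamma> S R \<le> r/4 + 2 * (1/2)^n + r/4"
      using leash_le[OF K_nonempty \<Gamma>_nonempty, of A S R "r/4"] by simp
    then show "leash M A K J \<Gamma> S R < r" using tail[of n] \<open>r > 0\<close> by (simp add: n_def)
  qed
  moreover have "n \<ge> 1" "k \<ge> 1" "min \<delta> (r/8) > 0" using \<open>\<delta> > 0\<close> \<open>r > 0\<close> by (simp_all add: n_def k_def)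
  ultimately show ?thesis by blast
qed

lemma leash_open_contains_s_ball:
  fixes K :: "nat \<Rightarrow> 'g::{topological_space,group_add} set"
  assumes A: "\<And>i. A i \<in> sets M" and A_dense: "\<forall>Z\<in>sets M. \<forall>e>0. \<exists>i. measure M (sdiff (A i) Z) < e"
    and K_compact: "\<forall>i\<in>J. compact (K i)" and K_nonempty: "\<forall>i\<in>J. K i \<noteq> {}"
    and \<Gamma>_nonempty: "\<Gamma> \<noteq> {}" and U: "leash_open M A K J \<Gamma> U" and "S \<in> U"
  shows "\<exists>n\<ge>1. \<exists>k\<ge>1. \<exists>\<epsilon>>0. \<exists>T\<in>Mix M \<Gamma>.
    S \<in> s_ball M A K J \<Gamma> n k T \<epsilon> \<and> s_ball M A K J \<Gamma> n k T \<epsilon> \<subseteq> U"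
proof -
  obtain r where "r > 0" and ball: "\<And>R. R \<in> Mix M \<Gamma> \<Longrightarrow> leash M A K J \<Gamma> S R < r \<Longrightarrow> R \<in> U"
    using U \<open>S \<in> U\<close> unfolding leash_open_def by blast
  have S: "S \<in> Mix M \<Gamma>" using U \<open>S \<in> U\<close> unfolding leash_open_def by blast
  obtain n k \<epsilon> where "n \<ge> 1" "k \<ge> 1" "\<epsilon> > 0"
    and s_close: "\<forall>R\<in>Mix M \<Gamma>. dist_s M A K J \<Gamma> n k S R < \<epsilon> \<longrightarrow> leash M A K J \<Gamma> S R < r"
    using leash_ball_contains_s_ball[OF A A_dense K_compact K_nonempty \<Gamma>_nonempty S \<open>r > 0\<close>] by blast
  have "S \<in> s_ball M A K J \<Gamma> n k S \<epsilon>"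
    using S \<open>\<epsilon> > 0\<close> dist_s_self[OF \<Gamma>_nonempty] by (simp add: s_ball_def)
  moreover have "s_ball M A K J \<Gamma> n k S \<epsilon> \<subseteq> U" using s_close ball by (auto simp: s_ball_def)
  ultimately show ?thesis using \<open>n \<ge> 1\<close> \<open>k \<ge> 1\<close> \<open>\<epsilon> > 0\<close> S by blast
qed

end

theorem mainTheorem10:
  fixes M :: "'a measure"
    and A :: "nat \<Rightarrow> 'a set"
    and K :: "nat \<Rightarrow> 'g::{topological_group_add, t2_space, first_countable_topology} set"
    and J :: "nat set"
    and \<Gamma> :: "'g set"
  assumes "prob_space M"
    and nonatomic: "\<forall>X\<in>sets M. measure M X > 0 \<longrightarrow>
                (\<exists>Y\<in>sets M. Y \<subseteq> X \<and> 0 < measure M Y \<and> measure M Y < measure M X)"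
    and A_sets: "\<forall>i. A i \<in> sets M"
    and A_generates: "\<forall>X\<in>sets M. \<exists>Y\<in>sigma_sets (space M) (range A). sdiff X Y \<in> null_sets M"
    and A_dense: "\<forall>X\<in>sets M. \<forall>e>0. \<exists>i. measure M (sdiff (A i) X) < e"
    and "locally_compact_space (euclidean :: 'g topology)"
    and J_shape: "J = UNIV \<or> (\<exists>N. J = {..<N})"
    and K_compact: "\<forall>i\<in>J. compact (K i) \<and> interior (K i) \<noteq> {}"
    and K_generates: "\<exists>X. X \<subseteq> (\<Union>i\<in>J. K i) \<and> gen_subgroup X = UNIV"
    and \<Gamma>_unbounded: "\<not> (\<exists>C. compact C \<and> \<Gamma> \<subseteq> C)"
  shows "(\<forall>n\<ge>1. \<forall>k\<ge>1. \<forall>\<epsilon>>0. \<forall>T\<in>Mix M \<Gamma>.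
            leash_open M A K J \<Gamma> (s_ball M A K J \<Gamma> n k T \<epsilon>))
       \<and> (\<forall>U. leash_open M A K J \<Gamma> U \<longrightarrow>
            (\<forall>S\<in>U. \<exists>n\<ge>1. \<exists>k\<ge>1. \<exists>\<epsilon>>0. \<exists>T\<in>Mix M \<Gamma>.
               S \<in> s_ball M A K J \<Gamma> n k T \<epsilon> \<and> s_ball M A K J \<Gamma> n k T \<epsilon> \<subseteq> U))"
proof -
  interpret prob_space M by fact
  \<comment> \<open>Only density of the A_i, compactness of the K_i and unboundedness of \<open>\<Gamma>\<close> (for \<open>\<Gamma> \<noteq> {}\<close>)
      are needed.\<close>
  have A: "\<And>i. A i \<in> sets M" using A_sets by simp
  have \<Gamma>_nonempty: "\<Gamma> \<noteq> {}" using \<Gamma>_unbounded by auto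
  have K_nonempty: "\<forall>i\<in>J. K i \<noteq> {}" using K_compact interior_subset by blast
  have K_compact': "\<forall>i\<in>J. compact (K i)" using K_compact by blast
  show ?thesis
    using s_ball_leash_open[where A=A, OF A K_nonempty \<Gamma>_nonempty]
      leash_open_contains_s_ball[OF A A_dense K_compact' K_nonempty \<Gamma>_nonempty]
    by blast
qed

end
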